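(* Let $p(n,k)$ be the number of partitions of the integer $n$ into exactly $k$ positive parts and $q(n,k)$ the number of partitions of $n$ into exactly $k$ pairwise distinct positive parts. Let $(n_m,k_m)_{m\ge1}$ be a sequence of pairs of integers with $k_m\ge 2$ and $n_m\ge k_m$. If $n_m/k_m^3\to\infty$ then $q(n_m,k_m)/p(n_m,k_m)\to 1$; if $n_m/k_m^3\to 0$ then $q(n_m,k_m)/p(n_m,k_m)\to 0$. Equivalently, the probability that a uniformly random partition of $n_m$ into $k_m$ positive parts has two equal parts tends to $0$ in the first case and to $1$ in the second.
   Context: A partition of $n$ into $k$ positive parts is a multiset of $k$ positive integers with sum $n$ (equivalently a sequence $1\le x_1\le\dots\le x_k$ with $\sum x_i=n$). *)

theory Defs
  imports Complex_Main "HOL-Library.Multiset"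
begin

definition partitions :: "nat \<Rightarrow> nat \<Rightarrow> nat multiset set" where
  "partitions n k = {M. size M = k \<and> sum_mset M = n \<and> 0 \<notin># M}"

definition p_part :: "nat \<Rightarrow> nat \<Rightarrow> nat" where
  "p_part n k = card (partitions n k)"

definition q_part :: "nat \<Rightarrow> nat \<Rightarrow> nat" where
  "q_part n k = card {M \<in> partitions n k. \<forall>x. count M x \<le> 1}"

end

theory Submission
  imports Defs "HOL-Combinatorics.Multiset_Permutations"
begin

text \<open>
  Compare partitions with compositions (ordered partitions). A partition \<open>M\<close> of \<open>n\<close> into
  \<open>k\<close> parts is the multiset of \<open>k! / \<Prod>x. (count M x)!\<close> compositions, so with \<open>C(n)\<close>
  the number \<open>(n-1 choose k-1)\<close> of compositions, \<open>k! q(n) \<le> C(n) \<le> k! p(n)\<close>.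

  Lower bound: adding \<open>0, 1, ..., k-1\<close> to the sorted parts maps partitions of \<open>n\<close> injectively
  to partitions of \<open>n + K\<close> into distinct parts, \<open>K = k choose 2\<close>. Hence \<open>k! p(n) \<le> C(n+K)\<close>
  and \<open>C(n-K) \<le> k! q(n)\<close>, while \<open>C(n-K) \<ge> (1 - O(k^3/n)) C(n+K)\<close>.

  Upper bound: \<open>\<Prod>x. (count M x)!\<close> exceeds the number of pairs of equal entries, so summing
  over compositions gives \<open>k! p(n) \<ge> \<Sum>i<j. #{x. x_i = x_j}\<close>. Replacing \<open>x_i, x_j\<close> by their
  minimum and adding their difference to a third entry \<open>x_l\<close> maps all compositions onto those
  with \<open>x_i = x_j\<close>, with fibres of size at most \<open>2 x_l\<close>; averaging over \<open>l\<close> gives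
  \<open>(k-2) C(n) \<le> 2n #{x. x_i = x_j}\<close>, and with \<open>k! q(n) \<le> C(n)\<close> this yields
  \<open>k^3 q(n) \<le> 18 n p(n)\<close>.
\<close>

definition compositions :: "nat \<Rightarrow> nat \<Rightarrow> nat list set" where
  "compositions n k = {xs. length xs = k \<and> sum_list xs = n \<and> 0 \<notin> set xs}"

definition count_fact_prod :: "'a multiset \<Rightarrow> nat" where
  "count_fact_prod M = (\<Prod>x\<in>set_mset M. fact (count M x))"

lemma finite_compositions: "finite (compositions n k)"
proof (rule finite_subset)
  show "compositions n k \<subseteq> {xs. set xs \<subseteq> {0..n} \<and> length xs = k}"
    by (auto simp: compositions_def member_le_sum_list)
qed (rule finite_lists_length_eq, simp)

lemma partitions_eq_image_mset: "partitions n k = mset ` compositions n k"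
proof
  show "mset ` compositions n k \<subseteq> partitions n k"
    by (auto simp: compositions_def partitions_def sum_mset_sum_list)
  show "partitions n k \<subseteq> mset ` compositions n k"
  proof
    fix M assume "M \<in> partitions n k"
    then have "sorted_list_of_multiset M \<in> compositions n k"
      by (auto simp: compositions_def partitions_def simp flip: sum_mset_sum_list size_mset)
    then show "M \<in> mset ` compositions n k"
      by (metis image_eqI mset_sorted_list_of_multiset)
  qed
qed

lemma finite_partitions: "finite (partitions n k)"
  by (simp add: partitions_eq_image_mset finite_compositions)

lemma compositions_with_mset:
  "M \<in> partitions n k \<Longrightarrow> {xs \<in> compositions n k. mset xs = M} = permutations_of_multiset M"
  by (auto simp: compositions_def partitions_def permutations_of_multiset_def
      simp flip: sum_mset_sum_list size_mset set_mset_mset)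

lemma sum_compositions_by_partition:
  "(\<Sum>xs\<in>compositions n k. g (mset xs)) =
     (\<Sum>M\<in>partitions n k. card (permutations_of_multiset M) * g M)"
proof -
  have "(\<Sum>xs\<in>compositions n k. g (mset xs)) =
      (\<Sum>M\<in>partitions n k. \<Sum>xs\<in>{xs \<in> compositions n k. mset xs = M}. g (mset xs))"
    unfolding partitions_eq_image_mset by (rule sum.image_gen[OF finite_compositions])
  also have "\<dots> = (\<Sum>M\<in>partitions n k. \<Sum>xs\<in>{xs \<in> compositions n k. mset xs = M}. g M)"
    by (intro sum.cong refl) auto
  also have "\<dots> = (\<Sum>M\<in>partitions n k. card (permutations_of_multiset M) * g M)"
    by (intro sum.cong refl) (simp add: compositions_with_mset)
  finally show ?thesis .
qed

lemma card_permutations_of_multiset_mult_count_fact_prod: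
  "card (permutations_of_multiset M) * count_fact_prod M = fact (size M)"
  unfolding count_fact_prod_def by (rule card_permutations_of_multiset_aux)

lemma count_fact_prod_pos: "count_fact_prod M \<ge> 1"
  unfolding count_fact_prod_def by (simp add: Suc_leI prod_pos)

lemma count_fact_prod_eq_1: "\<forall>x. count M x \<le> 1 \<Longrightarrow> count_fact_prod M = 1"
  unfolding count_fact_prod_def
  by (rule prod.neutral) (metis One_nat_def count_eq_zero_iff fact_1 le_Suc_eq le_zero_eq)

lemma sum_count_fact_prod_compositions:
  "(\<Sum>xs\<in>compositions n k. count_fact_prod (mset xs)) = fact k * p_part n k"
  by (simp add: sum_compositions_by_partition card_permutations_of_multiset_mult_count_fact_prod
      partitions_def p_part_def)

lemma card_compositions_le_p_part: "card (compositions n k) \<le> fact k * p_part n k"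
proof -
  have "card (compositions n k) \<le> (\<Sum>xs\<in>compositions n k. count_fact_prod (mset xs))"
    using sum_mono[OF count_fact_prod_pos, of "compositions n k" mset] by simp
  then show ?thesis by (simp add: sum_count_fact_prod_compositions)
qed

lemma q_part_le_card_compositions: "fact k * q_part n k \<le> card (compositions n k)"
proof -
  let ?Q = "{M \<in> partitions n k. \<forall>x. count M x \<le> 1}"
  have "(\<Sum>M\<in>?Q. card (permutations_of_multiset M)) = (\<Sum>M\<in>?Q. fact k)"
    by (intro sum.cong refl) (metis (mono_tags) mem_Collect_eq mult.right_neutral partitions_def
        count_fact_prod_eq_1 card_permutations_of_multiset_mult_count_fact_prod)
  then have "fact k * q_part n k = (\<Sum>M\<in>?Q. card (permutations_of_multiset M))"
    by (simp add: q_part_def)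
  also have "\<dots> \<le> (\<Sum>M\<in>partitions n k. card (permutations_of_multiset M))"
    by (rule sum_mono2[OF finite_partitions]) auto
  also have "\<dots> = card (compositions n k)"
    using sum_compositions_by_partition[where g = "\<lambda>_. 1"] by simp
  finally show ?thesis .
qed

lemma q_part_le_p_part: "q_part n k \<le> p_part n k"
  unfolding q_part_def p_part_def by (rule card_mono[OF finite_partitions]) auto

lemma p_part_pos: "1 \<le> k \<Longrightarrow> k \<le> n \<Longrightarrow> p_part n k > 0"
proof -
  assume "1 \<le> k" "k \<le> n"
  then have "replicate (k - 1) 1 @ [n - (k - 1)] \<in> compositions n k"
    by (auto simp: compositions_def sum_list_replicate)
  then have "partitions n k \<noteq> {}"
    unfolding partitions_eq_image_mset by blast
  then show ?thesis
    by (simp add: p_part_def finite_partitions card_gt_0_iff)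
qed

lemma sum_lessThan_id_eq_choose_two: "(\<Sum>i<k. i) = k choose 2"
  by (induction k) (simp_all add: numeral_2_eq_2)

lemma two_mult_choose_two: "2 * (k choose 2) = k * (k - 1)"
proof -
  have "even (k * (k - 1))"
    by (cases k) simp_all
  then show ?thesis
    by (simp add: choose_two)
qed

definition add_positions :: "nat list \<Rightarrow> nat list" where
  "add_positions xs = map (\<lambda>i. xs ! i + i) [0..<length xs]"

lemma length_add_positions [simp]: "length (add_positions xs) = length xs"
  by (simp add: add_positions_def)

lemma nth_add_positions [simp]: "i < length xs \<Longrightarrow> add_positions xs ! i = xs ! i + i"
  by (simp add: add_positions_def)

lemma sorted_wrt_add_positions: "sorted xs \<Longrightarrow> sorted_wrt (<) (add_positions xs)"
  by (auto simp: sorted_wrt_iff_nth_less sorted_iff_nth_mono intro: add_le_less_mono)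

lemma sum_list_add_positions:
  "sum_list (add_positions xs) = sum_list xs + (length xs choose 2)"
  by (simp add: add_positions_def sum_list_sum_nth sum.distrib atLeast0LessThan
      sum_lessThan_id_eq_choose_two)

lemma inj_add_positions: "inj add_positions"
proof (rule injI)
  fix xs ys assume eq: "add_positions xs = add_positions ys"
  then have "length xs = length ys"
    by (metis length_add_positions)
  moreover have "xs ! i = ys ! i" if "i < length xs" for i
    using arg_cong[OF eq, of "\<lambda>zs. zs ! i"] that \<open>length xs = length ys\<close> by simp
  ultimately show "xs = ys"
    by (rule nth_equalityI)
qed

lemma p_part_le_q_part_shift: "p_part n k \<le> q_part (n + (k choose 2)) k"
proof -
  let ?shift = "\<lambda>M. mset (add_positions (sorted_list_of_multiset M))"
  let ?Q = "{M \<in> partitions (n + (k choose 2)) k. \<forall>x. count M x \<le> 1}"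
  have "?shift M \<in> ?Q" if M: "M \<in> partitions n k" for M
  proof -
    let ?xs = "sorted_list_of_multiset M"
    have xs: "?xs \<in> compositions n k"
      using M by (auto simp: compositions_def partitions_def simp flip: sum_mset_sum_list size_mset)
    have "0 \<notin> set (add_positions ?xs)"
      using xs by (auto simp: compositions_def in_set_conv_nth)
    moreover have "distinct (add_positions ?xs)"
      using sorted_wrt_add_positions[of ?xs] by (simp add: strict_sorted_iff)
    ultimately show ?thesis
      using xs by (simp add: partitions_def compositions_def sum_mset_sum_list
          sum_list_add_positions distinct_count_atmost_1)
  qed
  moreover have "inj_on ?shift (partitions n k)"
  proof (rule inj_onI)
    fix M M' assume "?shift M = ?shift M'"
    then have "add_positions (sorted_list_of_multiset M) = add_positions (sorted_list_of_multiset M')"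
      by (metis properties_for_sort sorted_wrt_add_positions sorted_sorted_list_of_multiset
          strict_sorted_imp_sorted)
    then show "M = M'"
      by (metis inj_add_positions injD mset_sorted_list_of_multiset)
  qed
  ultimately have "card (partitions n k) \<le> card ?Q"
    by (intro card_inj_on_le) (auto simp: finite_partitions)
  then show ?thesis
    by (simp add: p_part_def q_part_def)
qed

lemma card_compositions:
  assumes "1 \<le> k" "1 \<le> n"
  shows "card (compositions n k) = (n - 1) choose (k - 1)"
proof (cases "k \<le> n")
  case True
  have image: "compositions n k = map Suc ` {xs. length xs = k \<and> sum_list xs = n - k}"
  proof (intro equalityI subsetI)
    fix xs assume xs: "xs \<in> compositions n k"
    define ys where "ys = map (\<lambda>x. x - 1) xs"
    have "0 \<notin> set xs \<Longrightarrow> map Suc (map (\<lambda>x. x - 1) xs) = xs"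
      by (induction xs) auto
    then have xs_eq: "xs = map Suc ys"
      using xs by (simp add: compositions_def ys_def)
    then have "ys \<in> {ys. length ys = k \<and> sum_list ys = n - k}"
      using xs by (auto simp: compositions_def sum_list_Suc)
    then show "xs \<in> map Suc ` {xs. length xs = k \<and> sum_list xs = n - k}"
      using xs_eq by blast
  qed (use True in \<open>auto simp: compositions_def sum_list_Suc\<close>)
  then have "card (compositions n k) = card {xs :: nat list. length xs = k \<and> sum_list xs = n - k}"
    unfolding image by (intro card_image) (simp add: inj_on_def)
  also have "\<dots> = (n - k + k - 1) choose (n - k)"
    by (rule card_length_sum_list)
  also have "\<dots> = (n - 1) choose (k - 1)"
    using True assms binomial_symmetric[of "k - 1" "n - 1"] by (simp add: Suc_diff_le)
  finally show ?thesis .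
next
  case False
  have "length xs \<le> sum_list xs" if "0 \<notin> set xs" for xs :: "nat list"
    using that by (induction xs) auto
  then have "compositions n k = {}"
    using False by (fastforce simp: compositions_def)
  then show ?thesis
    using False assms by simp
qed

lemma card_compositions_Suc:
  assumes "1 \<le> k" "1 \<le> n"
  shows "(n - (k - 1)) * card (compositions (Suc n) k) = n * card (compositions n k)"
  using assms binomial_absorb_comp[of n "k - 1"] by (simp add: card_compositions)

lemma card_compositions_step:
  assumes "1 \<le> k" "1 \<le> m" "m \<le> n"
  shows "(1 - (real k - 1) / real m) * card (compositions (Suc n) k) \<le> card (compositions n k)"
proof -
  define a where "a = (real k - 1) / real m"
  have "real k - 1 = a * real m"
    using assms by (simp add: a_def)
  also have "\<dots> \<le> a * real n"
    using assms by (intro mult_left_mono) (simp_all add: a_def)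
  moreover have "real n - (real k - 1) \<le> real (n - (k - 1))"
    using assms by (cases "k - 1 \<le> n") simp_all
  ultimately have "(1 - a) * real n \<le> real (n - (k - 1))"
    by (simp add: algebra_simps)
  then have "(1 - a) * real n * card (compositions (Suc n) k)
      \<le> real (n - (k - 1)) * card (compositions (Suc n) k)"
    by (rule mult_right_mono) simp
  also have "\<dots> = real n * card (compositions n k)"
    using card_compositions_Suc[of k n] assms by (metis le_trans of_nat_mult)
  finally show ?thesis
    using assms by (simp add: a_def mult.assoc mult.left_commute[of "real n"])
qed

lemma linear_bound_from_ratio_bound:
  fixes c :: "nat \<Rightarrow> real"
  assumes "a \<ge> 0" and "\<And>t. c t \<ge> 0" and "\<And>t. (1 - a) * c (Suc t) \<le> c t"
  shows "(1 - real j * a) * c j \<le> c 0"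
proof (induction j)
  case (Suc j)
  show ?case
  proof (cases "1 - real j * a \<ge> 0")
    case True
    have "1 - real (Suc j) * a \<le> (1 - real j * a) * (1 - a)"
      using assms(1) by (simp add: algebra_simps)
    then have "(1 - real (Suc j) * a) * c (Suc j) \<le> (1 - real j * a) * ((1 - a) * c (Suc j))"
      unfolding mult.assoc[symmetric] using assms(2) by (rule mult_right_mono)
    also have "\<dots> \<le> (1 - real j * a) * c j"
      using True assms(3) by (intro mult_left_mono)
    finally show ?thesis
      using Suc.IH by linarith
  next
    case False
    then have "(1 - real (Suc j) * a) * c (Suc j) \<le> 0"
      using assms by (intro mult_nonpos_nonneg) (simp_all add: algebra_simps)
    then show ?thesis
      using assms(2)[of 0] by linarith
  qed
qed simp

lemma card_compositions_shift_ratio: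
  assumes "1 \<le> k" "1 \<le> m"
  shows "(1 - real j * ((real k - 1) / real m)) * card (compositions (m + j) k)
    \<le> card (compositions m k)"
proof (rule linear_bound_from_ratio_bound[where c = "\<lambda>t. card (compositions (m + t) k)",
      simplified])
  show "(1 - (real k - 1) / real m) * card (compositions (Suc (m + t)) k)
      \<le> card (compositions (m + t) k)" for t
    using card_compositions_step[OF assms] by simp
qed (use assms in simp)

definition equal_index_pairs :: "'a list \<Rightarrow> (nat \<times> nat) set" where
  "equal_index_pairs xs = {(i, j). i < j \<and> j < length xs \<and> xs ! i = xs ! j}"

lemma finite_equal_index_pairs: "finite (equal_index_pairs xs)"
  by (rule finite_subset[of _ "{..<length xs} \<times> {..<length xs}"])
    (auto simp: equal_index_pairs_def)

lemma card_equal_index_pairs_snoc: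
  "card (equal_index_pairs (xs @ [a])) = card (equal_index_pairs xs) + count (mset xs) a"
proof -
  let ?new = "(\<lambda>i. (i, length xs)) ` {i. i < length xs \<and> xs ! i = a}"
  have split: "equal_index_pairs (xs @ [a]) = equal_index_pairs xs \<union> ?new"
    by (auto simp: equal_index_pairs_def nth_append less_Suc_eq)
  moreover have "card ?new = count (mset xs) a"
    by (simp add: card_image inj_on_def count_mset count_list_eq_length_filter
        length_filter_conv_card eq_commute)
  moreover have "equal_index_pairs xs \<inter> ?new = {}"
    by (auto simp: equal_index_pairs_def)
  ultimately show ?thesis
    unfolding split by (simp add: card_Un_disjoint finite_equal_index_pairs)
qed

lemma count_fact_prod_add_mset:
  "count_fact_prod (add_mset x A) = (count A x + 1) * count_fact_prod A"
proof -
  have "count_fact_prod (add_mset x A) =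
      (\<Prod>y\<in>set_mset (add_mset x A). (if y = x then count A x + 1 else 1) * fact (count A y))"
    unfolding count_fact_prod_def by (intro prod.cong) simp_all
  also have "\<dots> = (count A x + 1) * (\<Prod>y\<in>set_mset (add_mset x A). fact (count A y))"
    by (simp add: prod.distrib)
  also have "(\<Prod>y\<in>set_mset (add_mset x A). fact (count A y)) = count_fact_prod A"
    unfolding count_fact_prod_def by (intro prod.mono_neutral_right) (auto simp: not_in_iff)
  finally show ?thesis .
qed

lemma card_equal_index_pairs_less_count_fact_prod:
  "card (equal_index_pairs xs) < count_fact_prod (mset xs)"
proof (induction xs rule: rev_induct)
  case Nil
  then show ?case by (simp add: equal_index_pairs_def count_fact_prod_def)
next
  case (snoc a xs)
  have "card (equal_index_pairs (xs @ [a])) < (1 + card (equal_index_pairs xs)) * (count (mset xs) a + 1)"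
    by (simp add: card_equal_index_pairs_snoc algebra_simps)
  also have "\<dots> \<le> count_fact_prod (mset xs) * (count (mset xs) a + 1)"
    using snoc.IH by (intro mult_right_mono) simp_all
  finally show ?case
    by (simp add: count_fact_prod_add_mset mult.commute)
qed

lemma sum_list_update_nat:
  "i < length xs \<Longrightarrow> sum_list (xs[i := v]) + xs ! i = sum_list xs + (v :: nat)"
  using sum_list_update[of i xs v] elem_le_sum_list[of i xs] by simp

(* (x - y) + (y - x) is |x - y| under truncated subtraction *)
definition merge_pair :: "nat \<Rightarrow> nat \<Rightarrow> nat \<Rightarrow> nat list \<Rightarrow> nat list" where
  "merge_pair i j l xs =
     xs[i := min (xs!i) (xs!j), j := min (xs!i) (xs!j), l := xs!l + ((xs!i - xs!j) + (xs!j - xs!i))]"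

definition unmerge_pair :: "nat \<Rightarrow> nat \<Rightarrow> nat \<Rightarrow> nat list \<Rightarrow> nat \<times> bool \<Rightarrow> nat list" where
  "unmerge_pair i j l ys = (\<lambda>(d, b).
     ys[l := ys!l - d, i := (if b then ys!i + d else ys!i), j := (if b then ys!j else ys!j + d)])"

lemma length_merge_pair [simp]: "length (merge_pair i j l xs) = length xs"
  by (simp add: merge_pair_def)

context
  fixes i j l k n :: nat
  assumes ijl: "i < k" "j < k" "l < k" "i \<noteq> j" "i \<noteq> l" "j \<noteq> l"
begin

lemma nth_merge_pair:
  assumes "length xs = k" "t < k"
  shows "merge_pair i j l xs ! t = (if t = l then xs!l + ((xs!i - xs!j) + (xs!j - xs!i))
      else if t = i \<or> t = j then min (xs!i) (xs!j) else xs!t)"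
  using assms ijl by (auto simp: merge_pair_def nth_list_update)

lemma merge_pair_in_compositions:
  assumes xs: "xs \<in> compositions n k"
  shows "merge_pair i j l xs \<in> {ys \<in> compositions n k. ys!i = ys!j}"
proof -
  have len: "length xs = k"
    using xs by (simp add: compositions_def)
  have pos: "\<forall>t<k. xs!t \<noteq> 0"
    using xs len unfolding compositions_def by (metis (mono_tags) mem_Collect_eq nth_mem)
  define m where "m = min (xs!i) (xs!j)"
  define d where "d = (xs!i - xs!j) + (xs!j - xs!i)"
  have "sum_list (xs[i := m]) + xs!i = sum_list xs + m"
    "sum_list (xs[i := m, j := m]) + xs!j = sum_list (xs[i := m]) + m"
    "sum_list (merge_pair i j l xs) + xs!l = sum_list (xs[i := m, j := m]) + (xs!l + d)"
    using len ijl sum_list_update_nat[of i xs] sum_list_update_nat[of j "xs[i := m]"]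
      sum_list_update_nat[of l "xs[i := m, j := m]"]
    by (simp_all add: merge_pair_def m_def d_def)
  moreover have "m + m + d = xs!i + xs!j"
    by (simp add: m_def d_def)
  ultimately have "sum_list (merge_pair i j l xs) = sum_list xs"
    by linarith
  moreover have "merge_pair i j l xs ! t \<noteq> 0" if "t < k" for t
    using pos that len ijl by (simp add: nth_merge_pair min_def)
  ultimately show ?thesis
    using xs len ijl by (auto simp: compositions_def nth_merge_pair in_set_conv_nth)
qed

lemma merge_pair_fiber_subset:
  assumes ys: "ys \<in> compositions n k"
  shows "{xs \<in> compositions n k. merge_pair i j l xs = ys} \<subseteq> unmerge_pair i j l ys ` ({..<ys!l} \<times> UNIV)"
proof
  fix xs assume "xs \<in> {xs \<in> compositions n k. merge_pair i j l xs = ys}"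
  then have xs: "xs \<in> compositions n k" and ys_eq: "ys = merge_pair i j l xs"
    by auto
  have len: "length xs = k" "length ys = k"
    using xs ys by (simp_all add: compositions_def)
  have "xs!l \<noteq> 0"
    using xs len ijl unfolding compositions_def by (metis (mono_tags) mem_Collect_eq nth_mem)
  define d where "d = (xs!i - xs!j) + (xs!j - xs!i)"
  have ys_nth: "ys ! t = (if t = l then xs!l + d else if t = i \<or> t = j then min (xs!i) (xs!j) else xs!t)"
    if "t < k" for t
    using len that by (simp add: ys_eq nth_merge_pair d_def)
  have "d < ys!l"
    using \<open>xs!l \<noteq> 0\<close> ys_nth[of l] ijl by simp
  moreover have "xs = unmerge_pair i j l ys (d, xs!j \<le> xs!i)"
  proof (rule nth_equalityI)
    fix t assume "t < length xs"
    then show "xs ! t = unmerge_pair i j l ys (d, xs!j \<le> xs!i) ! t"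
      using len ijl ys_nth[of t] ys_nth[of i] ys_nth[of j] ys_nth[of l]
      by (auto simp: unmerge_pair_def nth_list_update d_def)
  qed (simp add: len unmerge_pair_def)
  ultimately show "xs \<in> unmerge_pair i j l ys ` ({..<ys!l} \<times> UNIV)"
    by blast
qed

lemma card_merge_pair_fiber:
  assumes "ys \<in> compositions n k"
  shows "card {xs \<in> compositions n k. merge_pair i j l xs = ys} \<le> 2 * ys!l"
proof -
  have "card {xs \<in> compositions n k. merge_pair i j l xs = ys}
      \<le> card (unmerge_pair i j l ys ` ({..<ys!l} \<times> (UNIV :: bool set)))"
    by (rule card_mono[OF _ merge_pair_fiber_subset[OF assms]]) simp
  also have "\<dots> \<le> card ({..<ys!l} \<times> (UNIV :: bool set))"
    by (rule card_image_le) simp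
  finally show ?thesis
    by (simp add: card_cartesian_product)
qed

lemma card_compositions_le_merge_pair:
  "card (compositions n k) \<le> (\<Sum>ys\<in>{ys \<in> compositions n k. ys!i = ys!j}. 2 * ys!l)"
proof -
  let ?E = "{ys \<in> compositions n k. ys!i = ys!j}"
  have "card (compositions n k) =
      (\<Sum>ys\<in>merge_pair i j l ` compositions n k. card {xs \<in> compositions n k. merge_pair i j l xs = ys})"
    using sum.image_gen[OF finite_compositions, of "\<lambda>_. 1::nat" n k "merge_pair i j l"] by simp
  also have "\<dots> \<le> (\<Sum>ys\<in>merge_pair i j l ` compositions n k. 2 * ys!l)"
    by (intro sum_mono card_merge_pair_fiber) (use merge_pair_in_compositions in auto)
  also have "\<dots> \<le> (\<Sum>ys\<in>?E. 2 * ys!l)"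
    by (intro sum_mono2) (use merge_pair_in_compositions finite_compositions in auto)
  finally show ?thesis .
qed

end

definition index_pairs :: "nat \<Rightarrow> (nat \<times> nat) set" where
  "index_pairs k = {(i, j). i < j \<and> j < k}"

lemma finite_index_pairs: "finite (index_pairs k)"
  by (rule finite_subset[of _ "{..<k} \<times> {..<k}"]) (auto simp: index_pairs_def)

lemma card_index_pairs: "card (index_pairs k) = k choose 2"
proof (induction k)
  case (Suc k)
  have "index_pairs (Suc k) = index_pairs k \<union> (\<lambda>i. (i, k)) ` {..<k}"
    by (auto simp: index_pairs_def less_Suc_eq)
  moreover have "index_pairs k \<inter> (\<lambda>i. (i, k)) ` {..<k} = {}"
    by (auto simp: index_pairs_def)
  ultimately have "card (index_pairs (Suc k)) = card (index_pairs k) + k"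
    by (simp add: card_Un_disjoint finite_index_pairs card_image inj_on_def)
  then show ?case
    using Suc.IH by (simp add: numeral_2_eq_2)
qed (simp add: index_pairs_def)

lemma card_compositions_le_equal_entries:
  assumes "i < k" "j < k" "i \<noteq> j"
  shows "(k - 2) * card (compositions n k) \<le> 2 * n * card {ys \<in> compositions n k. ys!i = ys!j}"
proof -
  let ?E = "{ys \<in> compositions n k. ys!i = ys!j}"
  let ?L = "{..<k} - {i, j}"
  have "card ?L * card (compositions n k) = (\<Sum>l\<in>?L. card (compositions n k))"
    by simp
  also have "\<dots> \<le> (\<Sum>l\<in>?L. \<Sum>ys\<in>?E. 2 * ys!l)"
    using assms by (intro sum_mono card_compositions_le_merge_pair) auto
  also have "\<dots> = (\<Sum>ys\<in>?E. 2 * (\<Sum>l\<in>?L. ys!l))"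
    by (subst sum.swap) (simp add: sum_distrib_left)
  also have "\<dots> \<le> (\<Sum>ys\<in>?E. 2 * n)"
  proof (intro sum_mono mult_left_mono)
    fix ys assume "ys \<in> ?E"
    then have "(\<Sum>l<k. ys!l) = n"
      by (auto simp: compositions_def sum_list_sum_nth atLeast0LessThan)
    then show "(\<Sum>l\<in>?L. ys!l) \<le> n"
      using sum_mono2[of "{..<k}" ?L "\<lambda>l. ys!l"] by auto
  qed simp
  finally show ?thesis
    using assms by (simp add: card_Diff_subset mult.commute numeral_2_eq_2)
qed

lemma sum_card_equal_index_pairs_compositions:
  "(\<Sum>xs\<in>compositions n k. card (equal_index_pairs xs)) =
     (\<Sum>(i, j)\<in>index_pairs k. card {ys \<in> compositions n k. ys!i = ys!j})"
proof -
  have "card (equal_index_pairs xs) = (\<Sum>(i, j)\<in>index_pairs k. if xs!i = xs!j then 1 else 0)"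
    if "xs \<in> compositions n k" for xs
  proof -
    have "equal_index_pairs xs = {p \<in> index_pairs k. xs!fst p = xs!snd p}"
      using that by (auto simp: equal_index_pairs_def index_pairs_def compositions_def)
    then show ?thesis
      by (simp add: sum.If_cases finite_index_pairs Int_def conj_commute case_prod_beta)
  qed
  then have "(\<Sum>xs\<in>compositions n k. card (equal_index_pairs xs)) =
      (\<Sum>xs\<in>compositions n k. \<Sum>(i, j)\<in>index_pairs k. if xs!i = xs!j then 1 else 0)"
    by (rule sum.cong[OF refl])
  also have "\<dots> = (\<Sum>(i, j)\<in>index_pairs k. \<Sum>xs\<in>compositions n k. if xs!i = xs!j then 1 else 0)"
    by (subst sum.swap) (simp add: case_prod_beta)
  also have "\<dots> = (\<Sum>(i, j)\<in>index_pairs k. card {ys \<in> compositions n k. ys!i = ys!j})"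
    by (intro sum.cong refl) (simp add: sum.If_cases finite_compositions Int_def conj_commute case_prod_beta)
  finally show ?thesis .
qed

lemma q_part_upper_bound_nat: "(k choose 2) * (k - 2) * q_part n k \<le> 2 * n * p_part n k"
proof -
  have "fact k * ((k choose 2) * (k - 2) * q_part n k) \<le> (k choose 2) * (k - 2) * card (compositions n k)"
    using q_part_le_card_compositions[of k n] by simp
  also have "\<dots> = (\<Sum>p\<in>index_pairs k. (k - 2) * card (compositions n k))"
    by (simp add: card_index_pairs)
  also have "\<dots> \<le> (\<Sum>(i, j)\<in>index_pairs k. 2 * n * card {ys \<in> compositions n k. ys!i = ys!j})"
    by (intro sum_mono) (auto simp: index_pairs_def intro: card_compositions_le_equal_entries)
  also have "\<dots> = 2 * n * (\<Sum>xs\<in>compositions n k. card (equal_index_pairs xs))"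
    by (simp add: sum_card_equal_index_pairs_compositions sum_distrib_left case_prod_beta)
  also have "\<dots> \<le> 2 * n * (\<Sum>xs\<in>compositions n k. count_fact_prod (mset xs))"
    by (intro mult_left_mono sum_mono)
      (simp_all add: less_imp_le[OF card_equal_index_pairs_less_count_fact_prod])
  also have "\<dots> = fact k * (2 * n * p_part n k)"
    by (simp add: sum_count_fact_prod_compositions)
  finally show ?thesis
    by simp
qed

lemma q_part_upper_bound:
  assumes "3 \<le> k"
  shows "real k ^ 3 * q_part n k \<le> 18 * real n * p_part n k"
proof -
  have "2 * real k ^ 3 \<le> 9 * (real k * (real k - 1) * (real k - 2))"
  proof -
    have "real k * 2 * real k \<le> 3 * (real k - 1) * (3 * (real k - 2))"
      by (rule mult_mono) (use assms in simp_all)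
    then have "real k * (real k * 2 * real k) \<le> real k * (3 * (real k - 1) * (3 * (real k - 2)))"
      by (rule mult_left_mono) simp
    then show ?thesis
      by (simp only: power3_eq_cube algebra_simps)
  qed
  also have "\<dots> = 9 * real (2 * (k choose 2) * (k - 2))"
    using assms by (simp only: two_mult_choose_two) simp
  also have "\<dots> = 2 * (9 * real ((k choose 2) * (k - 2)))"
    by simp
  finally have "real k ^ 3 * q_part n k \<le> 9 * real ((k choose 2) * (k - 2)) * q_part n k"
    by (intro mult_right_mono) simp_all
  also have "\<dots> \<le> 9 * real (2 * n * p_part n k)"
    using q_part_upper_bound_nat[of k n] by (simp flip: of_nat_mult)
  finally show ?thesis
    by simp
qed

lemma q_part_lower_bound:
  assumes "1 \<le> k" "k * k \<le> n"
  shows "(1 - 2 * real k ^ 3 / real n) * p_part n k \<le> q_part n k"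
proof -
  define K where "K = k choose 2"
  have "2 * K < n"
    using assms two_mult_choose_two[of k] unfolding K_def
    by (metis diff_less less_le_trans mult_less_cancel1 zero_less_one)
  define m where "m = n - K"
  have "1 \<le> m" "m + K = n" "real n \<le> 2 * real m"
    using \<open>2 * K < n\<close> by (simp_all add: m_def)
  define \<delta> where "\<delta> = real (2 * K) * ((real k - 1) / real m)"
  have \<delta>_le: "\<delta> \<le> 2 * real k ^ 3 / real n"
  proof -
    have "\<delta> = real k * (real k - 1) * (real k - 1) / real m"
      using assms two_mult_choose_two[of k] by (simp add: \<delta>_def K_def)
    also have "\<dots> \<le> real k ^ 3 / real m"
      using assms by (intro divide_right_mono) (simp_all add: power3_eq_cube mult_mono)
    also have "\<dots> = 2 * real k ^ 3 / (2 * real m)"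
      by simp
    also have "\<dots> \<le> 2 * real k ^ 3 / real n"
      using \<open>2 * K < n\<close> \<open>real n \<le> 2 * real m\<close> by (intro divide_left_mono) simp_all
    finally show ?thesis .
  qed
  have "fact k * p_part n k \<le> fact k * q_part (n + K) k"
    using p_part_le_q_part_shift[of n k] by (simp add: K_def)
  also have "\<dots> \<le> card (compositions (m + 2 * K) k)"
    using q_part_le_card_compositions[of k "n + K"] by (simp flip: \<open>m + K = n\<close> add: mult_2 add.assoc)
  finally have upper: "fact k * p_part n k \<le> card (compositions (m + 2 * K) k)" .
  have lower: "card (compositions m k) \<le> fact k * q_part n k"
    using card_compositions_le_p_part[of m k] p_part_le_q_part_shift[of m k] \<open>m + K = n\<close>
    by (metis K_def le_trans mult_le_mono2)
  have ratio: "(1 - \<delta>) * card (compositions (m + 2 * K) k) \<le> card (compositions m k)"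
    unfolding \<delta>_def by (rule card_compositions_shift_ratio[OF \<open>1 \<le> k\<close> \<open>1 \<le> m\<close>])
  have "(1 - \<delta>) * real (fact k * p_part n k) \<le> real (fact k * q_part n k)"
  proof (cases "\<delta> \<le> 1")
    case True
    have "(1 - \<delta>) * real (fact k * p_part n k) \<le> (1 - \<delta>) * card (compositions (m + 2 * K) k)"
      using True upper by (intro mult_left_mono of_nat_mono) simp_all
    also have "\<dots> \<le> real (fact k * q_part n k)"
      using ratio lower by linarith
    finally show ?thesis .
  next
    case False
    then have "(1 - \<delta>) * real (fact k * p_part n k) \<le> 0"
      by (intro mult_nonpos_nonneg) simp_all
    then show ?thesis
      by linarith
  qed
  moreover have "(1 - 2 * real k ^ 3 / real n) * real (fact k * p_part n k) \<le> (1 - \<delta>) * real (fact k * p_part n k)"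
    using \<delta>_le by (intro mult_right_mono) simp_all
  ultimately show ?thesis
    by (simp add: mult.left_commute[of _ "fact k"])
qed

lemma q_part_div_p_part_le_1: "real (q_part n k) / real (p_part n k) \<le> 1"
  using q_part_le_p_part[of n k] by (cases "p_part n k = 0") (simp_all add: divide_le_eq_1)

lemma q_part_div_p_part_tendsto_1:
  fixes n k :: "nat \<Rightarrow> nat"
  assumes "\<forall>\<^sub>F m in sequentially. 1 \<le> k m"
    and "filterlim (\<lambda>m. real (n m) / real (k m) ^ 3) at_top sequentially"
  shows "(\<lambda>m. real (q_part (n m) (k m)) / real (p_part (n m) (k m))) \<longlonglongrightarrow> 1"
proof -
  let ?a = "\<lambda>m. real (n m) / real (k m) ^ 3"
  let ?r = "\<lambda>m. real (q_part (n m) (k m)) / real (p_part (n m) (k m))"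
  have lower: "\<forall>\<^sub>F m in sequentially. 1 - 2 / ?a m \<le> ?r m"
    using assms(1) assms(2)[unfolded filterlim_at_top, rule_format, of 1]
  proof eventually_elim
    case (elim m)
    then have "k m ^ 3 \<le> n m"
      by (simp add: field_simps flip: of_nat_power)
    moreover have "k m \<le> k m * k m" "k m * k m \<le> k m ^ 3"
      using elim(1) by (simp_all add: power3_eq_cube)
    ultimately have "k m * k m \<le> n m" "k m \<le> n m"
      by linarith+
    then show ?case
      using q_part_lower_bound[of "k m" "n m"] p_part_pos[of "k m" "n m"] elim(1)
      by (simp add: le_divide_eq)
  qed
  have "(\<lambda>m. 2 / ?a m) \<longlonglongrightarrow> 0"
    by (rule tendsto_divide_0[OF tendsto_const filterlim_at_top_imp_at_infinity[OF assms(2)]])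
  then have lim: "(\<lambda>m. 1 - 2 / ?a m) \<longlonglongrightarrow> 1"
    using tendsto_diff[OF tendsto_const[of 1]] by fastforce
  have upper: "\<forall>\<^sub>F m in sequentially. ?r m \<le> 1"
    by (simp add: q_part_div_p_part_le_1)
  show ?thesis
    by (rule tendsto_sandwich[OF lower upper lim tendsto_const])
qed

lemma q_part_div_p_part_tendsto_0:
  fixes n k :: "nat \<Rightarrow> nat"
  assumes "\<forall>\<^sub>F m in sequentially. 2 \<le> k m \<and> k m \<le> n m"
    and "(\<lambda>m. real (n m) / real (k m) ^ 3) \<longlonglongrightarrow> 0"
  shows "(\<lambda>m. real (q_part (n m) (k m)) / real (p_part (n m) (k m))) \<longlonglongrightarrow> 0"
proof -
  let ?a = "\<lambda>m. real (n m) / real (k m) ^ 3"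
  let ?r = "\<lambda>m. real (q_part (n m) (k m)) / real (p_part (n m) (k m))"
  have upper: "\<forall>\<^sub>F m in sequentially. ?r m \<le> 18 * ?a m"
    using assms(1) order_tendstoD(2)[OF assms(2), of "1/4", simplified]
  proof eventually_elim
    case (elim m)
    have "3 \<le> k m"
      using elim by (cases "k m = 2") simp_all
    then show ?case
      using q_part_upper_bound[of "k m" "n m"] p_part_pos[of "k m" "n m"] elim(1)
      by (simp add: divide_simps mult.commute mult.left_commute)
  qed
  have lim: "(\<lambda>m. 18 * ?a m) \<longlonglongrightarrow> 0"
    using tendsto_mult_right_zero[OF assms(2)] by simp
  have lower: "\<forall>\<^sub>F m in sequentially. 0 \<le> ?r m"
    by simp
  show ?thesis
    by (rule tendsto_sandwich[OF lower upper tendsto_const lim])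
qed

theorem mainTheorem4:
  fixes n k :: "nat \<Rightarrow> nat"
  assumes "\<forall>m\<ge>1. k m \<ge> 2 \<and> n m \<ge> k m"
  shows "(filterlim (\<lambda>m. real (n m) / real (k m) ^ 3) at_top sequentially \<longrightarrow>
           (\<lambda>m. real (q_part (n m) (k m)) / real (p_part (n m) (k m))) \<longlonglongrightarrow> 1)
       \<and> ((\<lambda>m. real (n m) / real (k m) ^ 3) \<longlonglongrightarrow> 0 \<longrightarrow>
           (\<lambda>m. real (q_part (n m) (k m)) / real (p_part (n m) (k m))) \<longlonglongrightarrow> 0)"
proof -
  have eventually_k: "\<forall>\<^sub>F m in sequentially. 2 \<le> k m \<and> k m \<le> n m"
    by (rule eventually_mono[OF eventually_ge_at_top[of 1]]) (use assms in auto)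
  then have "\<forall>\<^sub>F m in sequentially. 1 \<le> k m"
    by (auto elim: eventually_mono)
  with eventually_k show ?thesis
    using q_part_div_p_part_tendsto_1 q_part_div_p_part_tendsto_0 by blast
qed

end
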